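(* For all real $\alpha,\beta$, every non-negative integer $r$ and all integers $0\le k\le n$, \[ S_{r\alpha,\beta}(n,k)=B^{(r)}_{n+r,k+r}\big(\langle-\beta\rangle_j;\langle-\alpha\rangle_{j-1}\big), \] i.e. the partial $r$-Bell polynomial evaluated at $a_j=\langle-\beta\rangle_j$, $b_j=\langle-\alpha\rangle_{j-1}$ ($j\ge1$). Consequently, when $\beta\neq0$, $P_n^{(r\alpha,\beta)}(x)=\sum_{k=0}^{n}B^{(r)}_{n+r,k+r}\big(\langle-\beta\rangle_j;\langle-\alpha\rangle_{j-1}\big)x^k$.
   Context: For real $a$ and integer $n\ge 1$, $\langle a\rangle_n:=a(a+1)\cdots(a+n-1)$ and $\langle a\rangle_0:=1$. For real $\alpha,\beta$ and integers $0\le k\le n$, $S_{\alpha,\beta}(n,k):=\frac{1}{k!}\sum_{j=0}^{k}(-1)^{k-j}\binom{k}{j}\langle-\alpha-\beta j\rangle_n$. For real $\alpha,\beta$ with $\beta\neq0$, $P_n^{(\alpha,\beta)}(x)$ are defined by $\sum_{n\ge0}P_n^{(\alpha,\beta)}(x)\frac{t^n}{n!}=(1-t)^{\alpha}\exp\big(x((1-t)^{\beta}-1)\big)$. For sequences $(a_j)_{j\ge1},(b_j)_{j\ge1}$ and integers $r,k\ge0$, the partial $r$-Bell polynomials $B^{(r)}_{n+r,k+r}(a_j;b_j)$, $n\ge k$, are defined by $\sum_{n\ge k}B^{(r)}_{n+r,k+r}(a_j;b_j)\frac{t^n}{n!}=\frac{1}{k!}\Big(\sum_{j\ge1}a_j\frac{t^j}{j!}\Big)^k\Big(\sum_{j\ge0}b_{j+1}\frac{t^j}{j!}\Big)^r$.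 *)

theory Defs
  imports "HOL-Computational_Algebra.Formal_Power_Series"
begin

definition S_ab :: "real \<Rightarrow> real \<Rightarrow> nat \<Rightarrow> nat \<Rightarrow> real" where
  "S_ab \<alpha> \<beta> n k = (1 / fact k) *
     (\<Sum>j=0..k. (-1) ^ (k - j) * of_nat (k choose j) * pochhammer (- \<alpha> - \<beta> * of_nat j) n)"

text \<open>Partial r-Bell polynomial: rBell r n k a b is B^(r)_{n+r,k+r}(a_j; b_j), defined via the
  exponential generating function; the sequences are indexed from 1 (a 0, b 0 are unused).\<close>

definition rBell :: "nat \<Rightarrow> nat \<Rightarrow> nat \<Rightarrow> (nat \<Rightarrow> real) \<Rightarrow> (nat \<Rightarrow> real) \<Rightarrow> real" where
  "rBell r n k a b = fact n * fps_nth
     (fps_const (1 / fact k)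
      * (Abs_fps (\<lambda>j. if j = 0 then 0 else a j / fact j)) ^ k
      * (Abs_fps (\<lambda>j. b (j + 1) / fact j)) ^ r) n"

text \<open>P_n^{(alpha,beta)}(x) via the formal power series (1-t)^alpha exp(x((1-t)^beta - 1)).\<close>

definition Pab :: "real \<Rightarrow> real \<Rightarrow> nat \<Rightarrow> real \<Rightarrow> real" where
  "Pab \<alpha> \<beta> n x = fact n * fps_nth
     (fps_compose (fps_binomial \<alpha>) (- fps_X)
      * fps_compose (fps_exp x) (fps_compose (fps_binomial \<beta>) (- fps_X) - 1)) n"

end

theory Submission
  imports Defs
begin

text \<open>Both sides are coefficients of formal power series built from E(g) = (1 - t)^g, whose
  n-th coefficient is <-g>_n / n!. Since E(r a) = E(a)^r, the r-Bell polynomial is n!/k! times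
  the n-th coefficient of E(r a) (E(b) - 1)^k; expanding the k-th power binomially and using
  E(r a) E(b)^j = E(r a + b j) gives S. For the polynomials, exp (x u) = sum x^k u^k / k! is
  substituted with u = E(b) - 1.\<close>

unbundle fps_syntax

definition fps_one_minus_X_pow :: "real \<Rightarrow> real fps" where
  "fps_one_minus_X_pow \<gamma> = fps_compose (fps_binomial \<gamma>) (- fps_X)"

lemma fps_one_minus_X_pow_nth:
  "fps_one_minus_X_pow \<gamma> $ n = pochhammer (- \<gamma>) n / fact n"
  unfolding fps_one_minus_X_pow_def fps_compose_uminus'
  by (simp add: gbinomial_pochhammer power_mult_distrib[symmetric])

lemma fps_one_minus_X_pow_add:
  "fps_one_minus_X_pow (\<gamma> + \<delta>) = fps_one_minus_X_pow \<gamma> * fps_one_minus_X_pow \<delta>"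
  unfolding fps_one_minus_X_pow_def fps_binomial_add_mult
  by (rule fps_compose_mult_distrib) simp

lemma fps_one_minus_X_pow_of_nat_mult:
  "fps_one_minus_X_pow (of_nat r * \<gamma>) = fps_one_minus_X_pow \<gamma> ^ r"
proof (induction r)
  case 0
  show ?case by (simp add: fps_one_minus_X_pow_def)
next
  case (Suc r)
  have "of_nat (Suc r) * \<gamma> = \<gamma> + of_nat r * \<gamma>"
    by (simp add: algebra_simps)
  with Suc show ?case
    by (simp add: fps_one_minus_X_pow_add)
qed

lemma rBell_pochhammer_eq_fps_nth:
  "rBell r n k (\<lambda>j. pochhammer (- \<beta>) j) (\<lambda>j. pochhammer (- \<alpha>) (j - 1))
     = fact n / fact k
       * (fps_one_minus_X_pow (of_nat r * \<alpha>) * (fps_one_minus_X_pow \<beta> - 1) ^ k) $ n"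
proof -
  let ?E = fps_one_minus_X_pow
  have "Abs_fps (\<lambda>j. if j = 0 then 0 else pochhammer (- \<beta>) j / fact j) = ?E \<beta> - 1"
    and "Abs_fps (\<lambda>j. pochhammer (- \<alpha>) (j + 1 - 1) / fact j) = ?E \<alpha>"
    by (simp_all add: fps_eq_iff fps_one_minus_X_pow_nth)
  then have "rBell r n k (\<lambda>j. pochhammer (- \<beta>) j) (\<lambda>j. pochhammer (- \<alpha>) (j - 1))
      = fact n * (fps_const (1 / fact k) * (?E \<beta> - 1) ^ k * ?E \<alpha> ^ r) $ n"
    unfolding rBell_def by simp
  also have "\<dots> = fact n / fact k * (?E \<alpha> ^ r * (?E \<beta> - 1) ^ k) $ n"
    by (simp add: mult.assoc mult.commute[of "(?E \<beta> - 1) ^ k"])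
  finally show ?thesis
    unfolding fps_one_minus_X_pow_of_nat_mult .
qed

lemma S_ab_eq_fps_nth:
  "S_ab \<gamma> \<beta> n k
     = fact n / fact k * (fps_one_minus_X_pow \<gamma> * (fps_one_minus_X_pow \<beta> - 1) ^ k) $ n"
proof -
  let ?E = fps_one_minus_X_pow
  have binomial: "(?E \<beta> - 1) ^ k
      = (\<Sum>j=0..k. fps_const ((-1) ^ (k - j) * of_nat (k choose j)) * ?E \<beta> ^ j)"
  proof -
    have "(-1::real fps) ^ m = fps_const ((-1) ^ m)" for m
      by (metis fps_const_neg fps_const_1_eq_1 fps_const_power)
    then show ?thesis
      using binomial_ring[of "?E \<beta>" "-1" k]
      by (simp add: atLeast0AtMost fps_of_nat mult_ac flip: fps_const_mult)
  qed
  have shifted: "fact n * (?E \<gamma> * ?E \<beta> ^ j) $ n = pochhammer (- \<gamma> - \<beta> * of_nat j) n" for j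
  proof -
    have "?E \<gamma> * ?E \<beta> ^ j = ?E (\<gamma> + of_nat j * \<beta>)"
      by (simp add: fps_one_minus_X_pow_add fps_one_minus_X_pow_of_nat_mult)
    then show ?thesis
      by (simp add: fps_one_minus_X_pow_nth algebra_simps)
  qed
  have "(?E \<gamma> * (?E \<beta> - 1) ^ k) $ n
      = (\<Sum>j=0..k. (-1) ^ (k - j) * of_nat (k choose j) * (?E \<gamma> * ?E \<beta> ^ j) $ n)"
    unfolding binomial sum_distrib_left fps_sum_nth
    by (intro sum.cong refl) (simp add: mult.left_commute[of "?E \<gamma>"])
  then show ?thesis
    unfolding S_ab_def by (simp add: sum_distrib_left mult_ac flip: shifted)
qed

lemma fps_mult_compose_nth:
  fixes f a b :: "'a::comm_semiring_1 fps"
  assumes "b $ 0 = 0"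
  shows "(f * (a oo b)) $ n = (\<Sum>j=0..n. a $ j * (f * b ^ j) $ n)"
proof -
  have truncate: "(a oo b) $ m = (\<Sum>j=0..n. a $ j * b ^ j $ m)" if "m \<le> n" for m
    unfolding fps_compose_nth using that
    by (intro sum.mono_neutral_left) (auto simp: startsby_zero_power_prefix[OF assms])
  have "(f * (a oo b)) $ n = (\<Sum>i=0..n. f $ i * (\<Sum>j=0..n. a $ j * b ^ j $ (n - i)))"
    by (simp add: fps_mult_nth truncate)
  also have "\<dots> = (\<Sum>j=0..n. a $ j * (\<Sum>i=0..n. f $ i * b ^ j $ (n - i)))"
    unfolding sum_distrib_left by (subst sum.swap) (simp add: mult_ac)
  finally show ?thesis
    by (simp add: fps_mult_nth)
qed

lemma Pab_eq_sum_fps_nth: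
  "Pab \<gamma> \<beta> n x = (\<Sum>i=0..n. fact n / fact i
     * (fps_one_minus_X_pow \<gamma> * (fps_one_minus_X_pow \<beta> - 1) ^ i) $ n * x ^ i)"
proof -
  have "Pab \<gamma> \<beta> n x
      = fact n * (fps_one_minus_X_pow \<gamma> * (fps_exp x oo (fps_one_minus_X_pow \<beta> - 1))) $ n"
    unfolding Pab_def fps_one_minus_X_pow_def ..
  also have "\<dots> = fact n * (\<Sum>i=0..n. x ^ i / fact i
      * (fps_one_minus_X_pow \<gamma> * (fps_one_minus_X_pow \<beta> - 1) ^ i) $ n)"
    by (subst fps_mult_compose_nth) (simp_all add: fps_one_minus_X_pow_nth)
  finally show ?thesis
    by (simp add: sum_distrib_left mult_ac)
qed

theorem proposition4:
  fixes \<alpha> \<beta> :: real and r n k :: nat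
  assumes "k \<le> n"
  shows "S_ab (of_nat r * \<alpha>) \<beta> n k
           = rBell r n k (\<lambda>j. pochhammer (- \<beta>) j) (\<lambda>j. pochhammer (- \<alpha>) (j - 1))
         \<and> (\<beta> \<noteq> 0 \<longrightarrow> (\<forall>x::real. Pab (of_nat r * \<alpha>) \<beta> n x
           = (\<Sum>i=0..n. rBell r n i (\<lambda>j. pochhammer (- \<beta>) j) (\<lambda>j. pochhammer (- \<alpha>) (j - 1)) * x ^ i)))"
  unfolding S_ab_eq_fps_nth rBell_pochhammer_eq_fps_nth Pab_eq_sum_fps_nth by simp

end
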